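(* Let $\Gamma,\Gamma'$ be type environments, $H$ a heap and $R$ a register file with $\Gamma\le\Gamma'$ and $\mathrm{Cons}(H,R,\Gamma)$. Then: (1) for every $x\in dom(\Gamma')$ and every $a\in dom(H)$, $\mathrm{own}(H,R(x),\Gamma(x))(a)\ge\mathrm{own}(H,R(x),\Gamma'(x))(a)$; (2) for every $a\in dom(H)$, $\mathrm{Own}(H,R,\Gamma')(a)\le 1$; (3) for all types $\tau,\tau'$ and values $v$, if $\Gamma\vdash\tau\le\tau'$ and $\mathrm{SATv}(H,R,v,\tau)$ then $\mathrm{SATv}(H,R,v,\tau')$; (4) $\mathrm{SAT}(H,R,\Gamma')$; (5) $\mathrm{Cons}(H,R,\Gamma')$.
   Context: Refinement formulas are first-order formulas over integer program variables, integer literals, a value variable $\nu$, atomic predicates of a fixed theory and context-prefix predicates; $\models\psi$ means $\psi$ is valid. Types $\tau ::= \{\nu:\mathtt{int}\mid\varphi\}\mid\tau\ \mathtt{ref}^r$, $r\in[0,1]$ rational. Values: integers or addresses. Heap $H$: finite partial map addresses $\to$ values; register file $R$: finite partial map variables $\to$ values; type environment $\Gamma$: finite map variables $\to$ types. $[R]\varphi$: $[\emptyset]\varphi=\varphi$, $[R\{x\mapsto n\}]\varphi=[R][n/x]\varphi$ ($n$ integer), $[R\{x\mapsto a\}]\varphi=[R]\varphi$ ($a$ address). $[\![\Gamma]\!]$: conjunction of $[x/\nu]\varphi$ over $x$ with $\Gamma(x)=\{\nu:\mathtt{int}\mid\varphi\}$. Subtyping: $\Gamma\vdash\{\nu:\mathtt{int}\mid\varphi_1\}\le\{\nu:\mathtt{int}\mid\varphi_2\}$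 iff $\models[\![\Gamma]\!]\wedge\varphi_1\Rightarrow\varphi_2$; $\Gamma\vdash\tau_1\ \mathtt{ref}^{r_1}\le\tau_2\ \mathtt{ref}^{r_2}$ iff $r_1\ge r_2$ and $\Gamma\vdash\tau_1\le\tau_2$; $\Gamma\le\Gamma'$ iff for each $x\in dom(\Gamma')$, $x\in dom(\Gamma)$ and $\Gamma\vdash\Gamma(x)\le\Gamma'(x)$. $\mathrm{SATv}(H,R,v,\tau)$: for $\tau=\{\nu:\mathtt{int}\mid\varphi\}$, $v\in\mathbb Z$ and $\models[R][v/\nu]\varphi$; for $\tau=\tau'\ \mathtt{ref}^r$, $v=a\in dom(H)$ and $\mathrm{SATv}(H,R,H(a),\tau')$. $\mathrm{SAT}(H,R,\Gamma)$ iff every $x\in dom(\Gamma)$ is in $dom(R)$ and $\mathrm{SATv}(H,R,R(x),\Gamma(x))$. Ownership maps are functions from addresses to nonnegative rationals, added pointwise; $\{a\mapsto r\}$ maps $a$ to $r$ and all else to 0; $\emptyset$ is the zero map. $\mathrm{own}(H,v,\tau)=\{a\mapsto r\}+\mathrm{own}(H,H(a),\tau')$ if $v=a\in dom(H)$ and $\tau=\tau'\ \mathtt{ref}^r$, and $\emptyset$ otherwise. $\mathrm{Own}(H,R,\Gamma)=\sum_{x\in dom(\Gamma)}\mathrm{own}(H,R(x),\Gamma(x))$. $\mathrm{Cons}(H,R,\Gamma)$ iff $\mathrm{SAT}(H,R,\Gamma)$ and $\mathrm{Own}(H,R,\Gamma)(a)\le 1$ for all $a\in dom(H)$. *)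

theory Defs
  imports Main "HOL.Rat"
begin

datatype 'x fvar = Nu | PVar 'x

(* Refinement formulas, shallowly embedded: a formula is identified with its
   truth value under an assignment of integers to its variables (the atomic
   predicates of the fixed theory and context-prefix predicates are interpreted
   by their fixed meaning). *)
type_synonym 'x formula = "('x fvar \<Rightarrow> int) \<Rightarrow> bool"

definition valid :: "'x formula \<Rightarrow> bool" where
  "valid \<phi> \<longleftrightarrow> (\<forall>\<sigma>. \<phi> \<sigma>)"

definition subst :: "int \<Rightarrow> 'x fvar \<Rightarrow> 'x formula \<Rightarrow> 'x formula" where
  "subst n v \<phi> = (\<lambda>\<sigma>. \<phi> (\<sigma>(v := n)))"

definition rename :: "'x fvar \<Rightarrow> 'x fvar \<Rightarrow> 'x formula \<Rightarrow> 'x formula" where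
  "rename y v \<phi> = (\<lambda>\<sigma>. \<phi> (\<sigma>(v := \<sigma> y)))"

datatype 'x ty = TInt "'x formula" | TRef "'x ty" rat

datatype 'a val = IntV int | Addr 'a

type_synonym 'a heap = "'a \<rightharpoonup> 'a val"
type_synonym ('x,'a) regfile = "'x \<rightharpoonup> 'a val"
type_synonym 'x tyenv = "'x \<rightharpoonup> 'x ty"

primrec wf_ty :: "'x ty \<Rightarrow> bool" where
  "wf_ty (TInt \<phi>) = True"
| "wf_ty (TRef t r) = (0 \<le> r \<and> r \<le> 1 \<and> wf_ty t)"

definition wf_env :: "'x tyenv \<Rightarrow> bool" where
  "wf_env \<Gamma> \<longleftrightarrow> finite (dom \<Gamma>) \<and> (\<forall>x t. \<Gamma> x = Some t \<longrightarrow> wf_ty t)"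

definition subst_reg :: "('x,'a) regfile \<Rightarrow> 'x formula \<Rightarrow> 'x formula" where
  "subst_reg R \<phi> = (\<lambda>\<sigma>. \<phi> (\<lambda>y. case y of
        Nu \<Rightarrow> \<sigma> Nu
      | PVar x \<Rightarrow> (case R x of Some (IntV n) \<Rightarrow> n | _ \<Rightarrow> \<sigma> y)))"

definition env_formula :: "'x tyenv \<Rightarrow> 'x formula" where
  "env_formula \<Gamma> = (\<lambda>\<sigma>. \<forall>x \<phi>. \<Gamma> x = Some (TInt \<phi>) \<longrightarrow> rename (PVar x) Nu \<phi> \<sigma>)"

fun subty :: "'x tyenv \<Rightarrow> 'x ty \<Rightarrow> 'x ty \<Rightarrow> bool" where
  "subty \<Gamma> (TInt \<phi>1) (TInt \<phi>2) = valid (\<lambda>\<sigma>. env_formula \<Gamma> \<sigma> \<and> \<phi>1 \<sigma> \<longrightarrow> \<phi>2 \<sigma>)"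
| "subty \<Gamma> (TRef t1 r1) (TRef t2 r2) = (r1 \<ge> r2 \<and> subty \<Gamma> t1 t2)"
| "subty \<Gamma> _ _ = False"

definition env_le :: "'x tyenv \<Rightarrow> 'x tyenv \<Rightarrow> bool" where
  "env_le \<Gamma> \<Gamma>' \<longleftrightarrow> (\<forall>x \<in> dom \<Gamma>'. x \<in> dom \<Gamma> \<and> subty \<Gamma> (the (\<Gamma> x)) (the (\<Gamma>' x)))"

primrec SATv :: "'a heap \<Rightarrow> ('x,'a) regfile \<Rightarrow> 'a val \<Rightarrow> 'x ty \<Rightarrow> bool" where
  "SATv H R v (TInt \<phi>) =
     (\<exists>n. v = IntV n \<and> valid (subst_reg R (subst n Nu \<phi>)))"
| "SATv H R v (TRef t r) =
     (\<exists>a. v = Addr a \<and> a \<in> dom H \<and> SATv H R (the (H a)) t)"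

definition SAT :: "'a heap \<Rightarrow> ('x,'a) regfile \<Rightarrow> 'x tyenv \<Rightarrow> bool" where
  "SAT H R \<Gamma> \<longleftrightarrow> (\<forall>x \<in> dom \<Gamma>. x \<in> dom R \<and> SATv H R (the (R x)) (the (\<Gamma> x)))"

definition single_own :: "'a \<Rightarrow> rat \<Rightarrow> 'a \<Rightarrow> rat" where
  "single_own a r = (\<lambda>b. if b = a then r else 0)"

primrec own :: "'a heap \<Rightarrow> 'a val \<Rightarrow> 'x ty \<Rightarrow> 'a \<Rightarrow> rat" where
  "own H v (TInt \<phi>) = (\<lambda>_. 0)"
| "own H v (TRef t r) =
     (case v of Addr a \<Rightarrow> (case H a of Some w \<Rightarrow> (\<lambda>b. single_own a r b + own H w t b)
                                     | None \<Rightarrow> (\<lambda>_. 0))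
              | IntV _ \<Rightarrow> (\<lambda>_. 0))"

definition Own :: "'a heap \<Rightarrow> ('x,'a) regfile \<Rightarrow> 'x tyenv \<Rightarrow> 'a \<Rightarrow> rat" where
  "Own H R \<Gamma> = (\<lambda>a. \<Sum>x \<in> dom \<Gamma>. own H (the (R x)) (the (\<Gamma> x)) a)"

definition Cons :: "'a heap \<Rightarrow> ('x,'a) regfile \<Rightarrow> 'x tyenv \<Rightarrow> bool" where
  "Cons H R \<Gamma> \<longleftrightarrow> SAT H R \<Gamma> \<and> (\<forall>a \<in> dom H. Own H R \<Gamma> a \<le> 1)"

end

theory Submission
  imports Defs
begin

text \<open>
  Subtyping can only lower ownership fractions and weaken refinements. Lowering
  fractions, together with nonnegativity of ownership and \<open>dom \<Gamma>' \<subseteq> dom \<Gamma>\<close>,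
  bounds the total ownership of \<open>\<Gamma>'\<close> by that of \<open>\<Gamma>\<close>. Weakening a refinement is
  sound because \<open>SAT H R \<Gamma>\<close> makes \<open>[R][[\<Gamma>]]\<close> true: every integer-typed variable
  of \<open>\<Gamma>\<close> holds an integer satisfying its refinement, so the hypothesis
  \<open>[[\<Gamma>]]\<close> of the subtyping implication is discharged once \<open>R\<close> is substituted.
\<close>

lemma subty_own_le: "subty \<Gamma> t t' \<Longrightarrow> own H v t' a \<le> own H v t a"
proof (induction t arbitrary: t' v)
  case (TInt \<phi>)
  then show ?case by (cases t') auto
next
  case (TRef t r)
  then obtain t2 r2 where t': "t' = TRef t2 r2" and "r2 \<le> r" and "subty \<Gamma> t t2"
    by (cases t') auto
  with TRef.IH show ?case
    by (auto simp: single_own_def split: val.splits option.splits intro: add_mono)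
qed

lemma env_le_own_le:
  "env_le \<Gamma> \<Gamma>' \<Longrightarrow> x \<in> dom \<Gamma>' \<Longrightarrow> own H v (the (\<Gamma>' x)) a \<le> own H v (the (\<Gamma> x)) a"
  unfolding env_le_def by (blast intro: subty_own_le)

lemma own_nonneg: "wf_ty t \<Longrightarrow> 0 \<le> own H v t a"
  by (induction t arbitrary: v) (auto simp: single_own_def split: option.splits val.splits)

definition reg_assign :: "('x,'a) regfile \<Rightarrow> ('x fvar \<Rightarrow> int) \<Rightarrow> 'x fvar \<Rightarrow> int" where
  "reg_assign R \<sigma> = (\<lambda>y. case y of
        Nu \<Rightarrow> \<sigma> Nu
      | PVar x \<Rightarrow> (case R x of Some (IntV n) \<Rightarrow> n | _ \<Rightarrow> \<sigma> y))"

lemma subst_reg_subst_Nu: "subst_reg R (subst n Nu \<phi>) \<sigma> = \<phi> ((reg_assign R \<sigma>)(Nu := n))"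
  by (simp add: subst_reg_def subst_def reg_assign_def)

lemma SAT_env_formula:
  assumes "SAT H R \<Gamma>"
  shows "env_formula \<Gamma> ((reg_assign R \<sigma>)(Nu := n))"
  unfolding env_formula_def rename_def
proof (intro allI impI)
  fix x \<phi> assume \<Gamma>x: "\<Gamma> x = Some (TInt \<phi>)"
  with assms have "SATv H R (the (R x)) (TInt \<phi>)" and "x \<in> dom R"
    unfolding SAT_def by (metis domI option.sel)+
  then obtain m where Rx: "R x = Some (IntV m)" and "\<phi> ((reg_assign R \<sigma>)(Nu := m))"
    by (auto simp: valid_def subst_reg_subst_Nu)
  moreover have "reg_assign R \<sigma> (PVar x) = m"
    using Rx by (simp add: reg_assign_def)
  ultimately show "\<phi> (((reg_assign R \<sigma>)(Nu := n))(Nu := ((reg_assign R \<sigma>)(Nu := n)) (PVar x)))"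
    by simp
qed

lemma SATv_subty:
  assumes "SAT H R \<Gamma>"
  shows "subty \<Gamma> t t' \<Longrightarrow> SATv H R v t \<Longrightarrow> SATv H R v t'"
proof (induction t arbitrary: t' v)
  case (TInt \<phi>1)
  then obtain \<phi>2 where t': "t' = TInt \<phi>2"
    and impl: "\<And>\<sigma>. env_formula \<Gamma> \<sigma> \<Longrightarrow> \<phi>1 \<sigma> \<Longrightarrow> \<phi>2 \<sigma>"
    by (cases t') (auto simp: valid_def)
  from TInt.prems(2) obtain n where "v = IntV n" and "\<And>\<sigma>. \<phi>1 ((reg_assign R \<sigma>)(Nu := n))"
    by (auto simp: valid_def subst_reg_subst_Nu)
  with impl SAT_env_formula[OF assms] show ?case
    by (auto simp: t' valid_def subst_reg_subst_Nu)
next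
  case (TRef t r)
  then show ?case by (cases t') auto
qed

lemma SAT_env_le: "env_le \<Gamma> \<Gamma>' \<Longrightarrow> SAT H R \<Gamma> \<Longrightarrow> SAT H R \<Gamma>'"
  unfolding SAT_def env_le_def by (meson SATv_subty SAT_def)

lemma Own_env_le:
  assumes "wf_env \<Gamma>" and "env_le \<Gamma> \<Gamma>'"
  shows "Own H R \<Gamma>' a \<le> Own H R \<Gamma> a"
proof -
  have sub: "dom \<Gamma>' \<subseteq> dom \<Gamma>" and fin: "finite (dom \<Gamma>)"
    using assms unfolding env_le_def wf_env_def by blast+
  have "Own H R \<Gamma>' a \<le> (\<Sum>x \<in> dom \<Gamma>'. own H (the (R x)) (the (\<Gamma> x)) a)"
    unfolding Own_def using assms(2) by (intro sum_mono) (rule env_le_own_le)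
  also have "\<dots> \<le> Own H R \<Gamma> a"
    unfolding Own_def
  proof (rule sum_mono2[OF fin sub])
    fix x assume "x \<in> dom \<Gamma> - dom \<Gamma>'"
    with assms(1) have "wf_ty (the (\<Gamma> x))" by (auto simp: wf_env_def)
    then show "0 \<le> own H (the (R x)) (the (\<Gamma> x)) a" by (rule own_nonneg)
  qed
  finally show ?thesis .
qed

lemma Cons_env_le:
  assumes "wf_env \<Gamma>" and "env_le \<Gamma> \<Gamma>'" and "Cons H R \<Gamma>"
  shows "Cons H R \<Gamma>'"
  using assms SAT_env_le Own_env_le[OF assms(1,2)] unfolding Cons_def by (meson order_trans)

theorem lemma12:
  fixes \<Gamma> \<Gamma>' :: "'x tyenv" and H :: "'a heap" and R :: "('x,'a) regfile"
  assumes "wf_env \<Gamma>" and "wf_env \<Gamma>'"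
    and "finite (dom H)" and "finite (dom R)"
    and "env_le \<Gamma> \<Gamma>'" and "Cons H R \<Gamma>"
  shows "(\<forall>x \<in> dom \<Gamma>'. \<forall>a \<in> dom H.
            own H (the (R x)) (the (\<Gamma> x)) a \<ge> own H (the (R x)) (the (\<Gamma>' x)) a)
       \<and> (\<forall>a \<in> dom H. Own H R \<Gamma>' a \<le> 1)
       \<and> (\<forall>\<tau> \<tau>' v. wf_ty \<tau> \<longrightarrow> wf_ty \<tau>' \<longrightarrow> subty \<Gamma> \<tau> \<tau>' \<longrightarrow> SATv H R v \<tau> \<longrightarrow> SATv H R v \<tau>')
       \<and> SAT H R \<Gamma>'
       \<and> Cons H R \<Gamma>'"
proof -
  have SAT: "SAT H R \<Gamma>" using assms(6) by (simp add: Cons_def)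
  have cons': "Cons H R \<Gamma>'" using Cons_env_le[OF assms(1,5,6)] .
  have "\<forall>x \<in> dom \<Gamma>'. \<forall>a. own H (the (R x)) (the (\<Gamma>' x)) a \<le> own H (the (R x)) (the (\<Gamma> x)) a"
    by (intro ballI allI env_le_own_le[OF assms(5)])
  moreover have "\<forall>\<tau> \<tau>' v. subty \<Gamma> \<tau> \<tau>' \<longrightarrow> SATv H R v \<tau> \<longrightarrow> SATv H R v \<tau>'"
    using SATv_subty[OF SAT] by blast
  ultimately show ?thesis using cons' by (simp add: Cons_def)
qed

end
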